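(* Let $G=(V,E,w_G)$ be a directed graph with non-negative integer edge weights, $n=|V|$, $s\in V$, and $1\le h\le n$ an integer. Let $C\subseteq V$ contain $s$ and, for every pair of nodes $u,v$ for which the shortest path from $u$ to $v$ in $G$ consists of exactly $\lceil h/2\rceil$ nodes, at least one node of one of these shortest paths. For each $x\in C$ let $\tilde d(x,\cdot)$ satisfy $\mathrm{dist}_G(x,v)\le \tilde d(x,v)\le 2\,\mathrm{dist}^h_G(x,v)$ for all $v\in V$. Let $H=(C,C^2,w_H)$ with $w_H(x,y)=\tilde d(x,y)$. Let $G'=(V,E\cup(\{s\}\times C),w_{G'})$ where $w_{G'}(u,v)=\mathrm{dist}_H(u,v)$ for $(u,v)\in(\{s\}\times C)\setminus E$, $w_{G'}(u,v)=2w_G(u,v)$ for $(u,v)\in E\setminus(\{s\}\times C)$, and $w_{G'}(u,v)=\min(\mathrm{dist}_H(u,v),2w_G(u,v))$ for $(u,v)\in E\cap(\{s\}\times C)$. Then for every node $v\in V$, $\mathrm{dist}^h_{G'}(s,v)=\mathrm{dist}_{G'}(s,v)$.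
   Context: For a weighted directed graph, $\mathrm{dist}(u,v)$ denotes the minimum weight of a directed path from $u$ to $v$. For an integer $h\ge1$, the $h$-hop distance $\mathrm{dist}^h(u,v)$ is the minimum weight among all directed paths from $u$ to $v$ with at most $h$ edges. *)

theory Defs
  imports "HOL-Library.Extended_Real"
begin

text \<open>A weighted directed graph is given by a vertex set V, an edge set E and a
weight function w on pairs of vertices (only its values on E matter). Weights are extended reals, so that unreachable
pairs have distance infinity.\<close>

definition is_path :: "'a set \<Rightarrow> ('a \<times> 'a) set \<Rightarrow> 'a list \<Rightarrow> 'a \<Rightarrow> 'a \<Rightarrow> bool" where
  "is_path V E p u v \<longleftrightarrow> p \<noteq> [] \<and> hd p = u \<and> last p = v \<and> set p \<subseteq> V \<and> distinct p \<and>
     (\<forall>i. Suc i < length p \<longrightarrow> (p ! i, p ! Suc i) \<in> E)"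

definition path_weight :: "('a \<times> 'a \<Rightarrow> ereal) \<Rightarrow> 'a list \<Rightarrow> ereal" where
  "path_weight w p = (\<Sum>i < length p - 1. w (p ! i, p ! Suc i))"

definition dist :: "'a set \<Rightarrow> ('a \<times> 'a) set \<Rightarrow> ('a \<times> 'a \<Rightarrow> ereal) \<Rightarrow> 'a \<Rightarrow> 'a \<Rightarrow> ereal" where
  "dist V E w u v = Inf (path_weight w ` {p. is_path V E p u v})"

text \<open>h-hop distance: minimum weight of a directed path with at most h edges
(i.e. at most h+1 nodes).\<close>
definition hdist :: "nat \<Rightarrow> 'a set \<Rightarrow> ('a \<times> 'a) set \<Rightarrow> ('a \<times> 'a \<Rightarrow> ereal) \<Rightarrow> 'a \<Rightarrow> 'a \<Rightarrow> ereal" where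
  "hdist h V E w u v = Inf (path_weight w ` {p. is_path V E p u v \<and> length p \<le> Suc h})"

definition is_shortest_path :: "'a set \<Rightarrow> ('a \<times> 'a) set \<Rightarrow> ('a \<times> 'a \<Rightarrow> ereal) \<Rightarrow> 'a list \<Rightarrow> 'a \<Rightarrow> 'a \<Rightarrow> bool" where
  "is_shortest_path V E w p u v \<longleftrightarrow> is_path V E p u v \<and> path_weight w p = dist V E w u v"

end

theory Submission
  imports Defs
begin

text \<open>Take a shortest \<open>s\<close>-\<open>v\<close> path \<open>p\<close> of \<open>G'\<close> with the fewest edges and suppose it has more
than \<open>h\<close> edges. After its first edge \<open>(s, y)\<close> comes a subpath \<open>\<sigma>\<close> of \<open>\<lceil>h/2\<rceil>\<close> nodes
avoiding \<open>s\<close>; away from \<open>s\<close> the weights of \<open>G'\<close> are twice those of \<open>G\<close>, so \<open>\<sigma>\<close> is a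
shortest path of \<open>G\<close> and may be exchanged for an equally short one through a node
\<open>c \<in> C\<close>. The detour from \<open>s\<close> via \<open>y\<close> to \<open>c\<close> has at most \<open>h\<close> edges, hence the edge
\<open>(s, c)\<close> of \<open>G'\<close> is no heavier than it: if \<open>y \<in> C\<close> use the triangle inequality in \<open>H\<close>,
otherwise \<open>(s, y) \<in> E\<close>, \<open>h \<ge> 2\<close> (for \<open>h = 1\<close> every node lies in \<open>C\<close>) and \<open>dt s c\<close>
bounds the detour. Jumping from \<open>s\<close> straight to \<open>c\<close> thus yields an \<open>s\<close>-\<open>v\<close> walk of
weight at most \<open>dist(s, v)\<close> with fewer edges than \<open>p\<close>, a contradiction.\<close>

fun walk :: "('a \<times> 'a) set \<Rightarrow> 'a list \<Rightarrow> bool" where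
  "walk E (x # y # p) \<longleftrightarrow> (x, y) \<in> E \<and> walk E (y # p)"
| "walk E _ \<longleftrightarrow> True"

lemma walk_iff_nth: "walk E p \<longleftrightarrow> (\<forall>i. Suc i < length p \<longrightarrow> (p ! i, p ! Suc i) \<in> E)"
proof (induction E p rule: walk.induct)
  case (1 E x y p)
  have "(\<forall>i. Suc i < length (x # y # p) \<longrightarrow> ((x # y # p) ! i, (x # y # p) ! Suc i) \<in> E)
      \<longleftrightarrow> (x, y) \<in> E \<and> (\<forall>i. Suc i < length (y # p) \<longrightarrow> ((y # p) ! i, (y # p) ! Suc i) \<in> E)"
    by (auto simp: All_less_Suc2 simp del: nth_Cons_Suc)
  then show ?case using 1 by simp
qed auto

lemma is_path_iff_walk:
  "is_path V E p u v \<longleftrightarrow> p \<noteq> [] \<and> hd p = u \<and> last p = v \<and> set p \<subseteq> V \<and> distinct p \<and> walk E p"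
  by (simp add: is_path_def walk_iff_nth)

lemma path_weight_Nil [simp]: "path_weight w [] = 0"
  and path_weight_singleton [simp]: "path_weight w [x] = 0"
  by (simp_all add: path_weight_def)

lemma path_weight_Cons_Cons [simp]:
  "path_weight w (x # y # p) = w (x, y) + path_weight w (y # p)"
  unfolding path_weight_def by (simp add: sum.lessThan_Suc_shift del: sum.lessThan_Suc)

lemma path_weight_Cons: "p \<noteq> [] \<Longrightarrow> path_weight w (x # p) = w (x, hd p) + path_weight w p"
  by (cases p) auto

lemma walk_Cons: "p \<noteq> [] \<Longrightarrow> walk E (x # p) \<longleftrightarrow> (x, hd p) \<in> E \<and> walk E p"
  by (cases p) auto

lemma path_weight_append:
  "p \<noteq> [] \<Longrightarrow> path_weight w (p @ q) = path_weight w p + path_weight w (last p # q)"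
  by (induction p rule: induct_list012) (auto simp: add.assoc)

lemma walk_append: "p \<noteq> [] \<Longrightarrow> walk E (p @ q) \<longleftrightarrow> walk E p \<and> walk E (last p # q)"
  by (induction p rule: induct_list012) auto

lemma path_weight_infix:
  assumes "q \<noteq> []"
  shows "path_weight w (p @ q @ r) = path_weight w (p @ [hd q]) + path_weight w q + path_weight w (last q # r)"
proof -
  obtain a q' where "q = a # q'" using assms by (cases q) auto
  then show ?thesis
    using path_weight_append[of "p @ [a]" w "q' @ r"] path_weight_append[of q w r]
    by (simp add: add.assoc)
qed

lemma walk_infix:
  assumes "q \<noteq> []"
  shows "walk E (p @ q @ r) \<longleftrightarrow> walk E (p @ [hd q]) \<and> walk E q \<and> walk E (last q # r)"
proof -
  obtain a q' where "q = a # q'" using assms by (cases q) auto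
  then show ?thesis using walk_append[of "p @ [a]" E "q' @ r"] walk_append[of q E r] by auto
qed

lemma walk_mono: "E \<subseteq> F \<Longrightarrow> walk E p \<Longrightarrow> walk F p"
  by (induction p rule: induct_list012) auto

lemma walk_avoiding: "walk (E \<union> {s} \<times> A) p \<Longrightarrow> s \<notin> set p \<Longrightarrow> walk E p"
  by (induction p rule: induct_list012) auto

lemma path_weight_nonneg: "\<forall>e\<in>E. 0 \<le> w e \<Longrightarrow> walk E p \<Longrightarrow> 0 \<le> path_weight w p"
  by (induction p rule: induct_list012) auto

lemma path_weight_mono:
  "\<forall>e\<in>E. w1 e \<le> w2 e \<Longrightarrow> walk E p \<Longrightarrow> path_weight w1 p \<le> path_weight w2 p"
  by (induction p rule: induct_list012) (auto intro: add_mono)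

lemma path_weight_cong:
  "walk E p \<Longrightarrow> (\<And>x y. (x, y) \<in> E \<Longrightarrow> x \<in> set p \<Longrightarrow> w1 (x, y) = w2 (x, y)) \<Longrightarrow>
    path_weight w1 p = path_weight w2 p"
  by (induction p rule: induct_list012) auto

lemma path_weight_cmult:
  "(\<And>e. 0 \<le> w e) \<Longrightarrow> path_weight (\<lambda>e. r * w e) p = r * path_weight w p"
  unfolding path_weight_def by (simp add: sum_ereal_right_distrib)

lemma walk_shortcut_to_path:
  assumes nonneg: "\<forall>e\<in>E. 0 \<le> w e"
  shows "walk E p \<Longrightarrow> p \<noteq> [] \<Longrightarrow> set p \<subseteq> V \<Longrightarrow>
    \<exists>q. is_path V E q (hd p) (last p) \<and> path_weight w q \<le> path_weight w p \<and> length q \<le> length p"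
proof (induction p rule: length_induct)
  case (1 p)
  show ?case
  proof (cases "distinct p")
    case True
    then show ?thesis using "1.prems" by (auto simp: is_path_iff_walk)
  next
    case False
    then obtain p1 x p2 p3 where p: "p = p1 @ [x] @ (p2 @ [x]) @ p3"
      using not_distinct_decomp by fastforce
    define p' where "p' = p1 @ [x] @ p3"
    have cycle: "walk E (x # p2 @ [x])" and "walk E p'"
      using "1.prems"(1) walk_infix[of "x # p2 @ [x]" E p1 p3] walk_infix[of "[x]" E p1 p3]
      unfolding p p'_def by simp_all
    moreover have "p' \<noteq> []" "set p' \<subseteq> V" "length p' < length p"
      using "1.prems" unfolding p p'_def by auto
    moreover have "hd p' = hd p" "last p' = last p"
      unfolding p p'_def by (cases p1; simp) (cases p3; simp)
    moreover have "path_weight w p' \<le> path_weight w p"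
      using path_weight_nonneg[OF nonneg cycle] unfolding p p'_def
      using path_weight_infix[of "x # p2 @ [x]" w p1 p3] path_weight_infix[of "[x]" w p1 p3]
      by (simp add: add_right_mono add_increasing2)
    ultimately show ?thesis using "1.IH" by (metis dual_order.trans less_imp_le_nat)
  qed
qed

lemma dist_le_path_weight: "is_path V E p u v \<Longrightarrow> dist V E w u v \<le> path_weight w p"
  unfolding dist_def by (rule Inf_lower) auto

lemma hdist_le_path_weight:
  "is_path V E p u v \<Longrightarrow> length p \<le> Suc h \<Longrightarrow> hdist h V E w u v \<le> path_weight w p"
  unfolding hdist_def by (rule Inf_lower) auto

lemma dist_le_hdist: "dist V E w u v \<le> hdist h V E w u v"
  unfolding hdist_def dist_def by (rule Inf_superset_mono) auto

lemma dist_nonneg: "\<forall>e\<in>E. 0 \<le> w e \<Longrightarrow> 0 \<le> dist V E w u v"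
  unfolding dist_def by (rule Inf_greatest) (auto simp: is_path_iff_walk intro: path_weight_nonneg)

lemma path_exists_if_dist_finite: "dist V E w u v \<noteq> \<infinity> \<Longrightarrow> \<exists>p. is_path V E p u v"
  unfolding dist_def by (metis (mono_tags) Collect_empty_eq Inf_empty image_empty top_ereal_def)

lemma dist_le_walk:
  assumes "\<forall>e\<in>E. 0 \<le> w e" "walk E p" "p \<noteq> []" "set p \<subseteq> V"
  shows "dist V E w (hd p) (last p) \<le> path_weight w p"
  using walk_shortcut_to_path[OF assms] dist_le_path_weight order_trans by metis

lemma hdist_le_walk:
  assumes "\<forall>e\<in>E. 0 \<le> w e" "walk E p" "p \<noteq> []" "set p \<subseteq> V" "length p \<le> Suc h"
  shows "hdist h V E w (hd p) (last p) \<le> path_weight w p"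
  using walk_shortcut_to_path[OF assms(1-4)] hdist_le_path_weight assms(5) order_trans le_trans
  by metis

lemma finite_paths: "finite V \<Longrightarrow> finite {p. is_path V E p u v}"
proof -
  assume fin: "finite V"
  have "{p. is_path V E p u v} \<subseteq> {p. set p \<subseteq> V \<and> length p \<le> card V}"
    by (auto simp: is_path_iff_walk) (metis card_mono distinct_card fin)
  then show ?thesis using finite_lists_length_le[OF fin] finite_subset by blast
qed

lemma shortest_path_exists:
  assumes "finite V" "is_path V E p u v"
  shows "\<exists>q. is_shortest_path V E w q u v"
proof -
  let ?W = "path_weight w ` {p. is_path V E p u v}"
  have "finite ?W" "?W \<noteq> {}" using finite_paths[OF assms(1)] assms(2) by auto
  then have "Inf ?W \<in> ?W" using Min_in Min_Inf by metis
  then show ?thesis unfolding is_shortest_path_def dist_def by auto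
qed

lemma dist_le_edge:
  assumes "\<forall>e\<in>E. 0 \<le> w e" "(x, y) \<in> E" "x \<in> V" "y \<in> V"
  shows "dist V E w x y \<le> w (x, y)"
  using dist_le_walk[OF assms(1), of "[x, y]"] assms by simp

lemma dist_triangle_edge:
  assumes "finite V" and nonneg: "\<forall>e\<in>E. 0 \<le> w e" and "(y, z) \<in> E" "z \<in> V"
  shows "dist V E w x z \<le> dist V E w x y + w (y, z)"
proof (cases "dist V E w x y = \<infinity>")
  case False
  then obtain p where p: "is_shortest_path V E w p x y"
    using path_exists_if_dist_finite shortest_path_exists[OF assms(1)] by metis
  then have "dist V E w x z \<le> path_weight w (p @ [z])"
    using dist_le_walk[OF nonneg, of "p @ [z]"] assms
    by (auto simp: is_shortest_path_def is_path_iff_walk walk_append)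
  also have "\<dots> = dist V E w x y + w (y, z)"
    using p path_weight_append[of p w "[z]"]
    by (auto simp: is_shortest_path_def is_path_iff_walk)
  finally show ?thesis .
qed (use assms in auto)

lemma shortest_path_infix:
  assumes nonneg: "\<forall>e\<in>E. 0 \<le> w e" and p: "is_shortest_path V E w (p @ q @ r) u v"
    and "q \<noteq> []" and finite_dist: "dist V E w u v \<noteq> \<infinity>"
  shows "is_shortest_path V E w q (hd q) (last q)"
proof -
  let ?a = "path_weight w (p @ [hd q])" and ?c = "path_weight w (last q # r)"
  have walks: "walk E (p @ [hd q])" "walk E q" "walk E (last q # r)"
    and q: "is_path V E q (hd q) (last q)"
    using p \<open>q \<noteq> []\<close> walk_infix[of q E p r]
    by (auto simp: is_shortest_path_def is_path_iff_walk)
  have split: "dist V E w u v = ?a + path_weight w q + ?c"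
    using p path_weight_infix[OF \<open>q \<noteq> []\<close>] by (simp add: is_shortest_path_def)
  have "0 \<le> ?a" "0 \<le> path_weight w q" "0 \<le> ?c"
    using path_weight_nonneg[OF nonneg] walks by auto
  then have finite_parts: "?a \<noteq> \<infinity>" "path_weight w q \<noteq> \<infinity>" "?c \<noteq> \<infinity>"
    using finite_dist split by auto
  have "path_weight w q \<le> dist V E w (hd q) (last q)"
  proof (rule ccontr)
    assume "\<not> ?thesis"
    then obtain q' where q': "is_path V E q' (hd q) (last q)" "path_weight w q' < path_weight w q"
      unfolding dist_def by (auto simp: not_le Inf_less_iff)
    have "walk E (p @ q' @ r)" "p @ q' @ r \<noteq> []" "set (p @ q' @ r) \<subseteq> V"
      using q' p walks walk_infix[of q' E p r]
      by (auto simp: is_shortest_path_def is_path_iff_walk)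
    moreover have "hd (p @ q' @ r) = u" "last (p @ q' @ r) = v"
      using p q' \<open>q \<noteq> []\<close> by (auto simp: is_shortest_path_def is_path_iff_walk hd_append last_append)
    ultimately have "dist V E w u v \<le> path_weight w (p @ q' @ r)"
      using dist_le_walk[OF nonneg] by metis
    also have "\<dots> = ?a + path_weight w q' + ?c"
      using q' path_weight_infix[of q' w p r] by (auto simp: is_path_iff_walk)
    also have "\<dots> < ?a + path_weight w q + ?c"
      using q'(2) finite_parts \<open>0 \<le> ?a\<close> \<open>0 \<le> ?c\<close>
      by (cases ?a; cases ?c; cases "path_weight w q"; cases "path_weight w q'") auto
    finally show False using split by simp
  qed
  then show ?thesis
    using q dist_le_path_weight[OF q] by (simp add: is_shortest_path_def antisym)
qed

lemma shortest_path_fewest_edges: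
  assumes "finite V" "\<forall>e\<in>E. 0 \<le> w e" "is_path V E p0 u v"
  obtains p where "is_shortest_path V E w p u v"
    and "\<And>q. walk E q \<Longrightarrow> q \<noteq> [] \<Longrightarrow> hd q = u \<Longrightarrow> last q = v \<Longrightarrow> set q \<subseteq> V \<Longrightarrow>
           path_weight w q \<le> dist V E w u v \<Longrightarrow> length p \<le> length q"
proof -
  obtain p1 where "is_shortest_path V E w p1 u v"
    using shortest_path_exists[OF assms(1,3)] by blast
  then obtain p where p: "is_shortest_path V E w p u v"
    and fewest: "\<And>q. is_shortest_path V E w q u v \<Longrightarrow> length p \<le> length q"
    using ex_has_least_nat[of "\<lambda>q. is_shortest_path V E w q u v" p1 length] by blast
  show thesis
  proof (rule that[OF p])
    fix q
    assume "walk E q" "q \<noteq> []" "hd q = u" "last q = v" "set q \<subseteq> V"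
      and q_weight: "path_weight w q \<le> dist V E w u v"
    then obtain q' where q': "is_path V E q' u v" "path_weight w q' \<le> path_weight w q"
      "length q' \<le> length q"
      using walk_shortcut_to_path[OF assms(2)] by metis
    then have "is_shortest_path V E w q' u v"
      using q_weight dist_le_path_weight[OF q'(1)] by (simp add: is_shortest_path_def antisym)
    then show "length p \<le> length q" using fewest q'(3) le_trans by blast
  qed
qed

locale hop_reduction =
  fixes V :: "'a set" and E :: "('a \<times> 'a) set" and wG :: "'a \<times> 'a \<Rightarrow> nat"
    and s :: 'a and h :: nat and C :: "'a set" and dt :: "'a \<Rightarrow> 'a \<Rightarrow> ereal"
  assumes finV: "finite V"
    and sV: "s \<in> V"
    and h1: "1 \<le> h"
    and CV: "C \<subseteq> V" and sC: "s \<in> C"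
    and hit: "\<forall>u v. (\<exists>p. is_shortest_path V E (\<lambda>e. ereal (real (wG e))) p u v
                          \<and> length p = nat \<lceil>real h / 2\<rceil>)
               \<longrightarrow> (\<exists>p. is_shortest_path V E (\<lambda>e. ereal (real (wG e))) p u v
                          \<and> length p = nat \<lceil>real h / 2\<rceil> \<and> set p \<inter> C \<noteq> {})"
    and dt: "\<forall>x\<in>C. \<forall>v\<in>V. dist V E (\<lambda>e. ereal (real (wG e))) x v \<le> dt x v
                         \<and> dt x v \<le> 2 * hdist h V E (\<lambda>e. ereal (real (wG e))) x v"
begin

abbreviation wg :: "'a \<times> 'a \<Rightarrow> ereal" where
  "wg \<equiv> \<lambda>e. ereal (real (wG e))"

definition k :: nat where
  "k = nat \<lceil>real h / 2\<rceil>"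

definition dH :: "'a \<times> 'a \<Rightarrow> ereal" where
  "dH = (\<lambda>(x, y). dist C (C \<times> C) (\<lambda>(a, b). dt a b) x y)"

definition E' :: "('a \<times> 'a) set" where
  "E' = E \<union> ({s} \<times> C)"

definition w' :: "'a \<times> 'a \<Rightarrow> ereal" where
  "w' = (\<lambda>e. if e \<in> ({s} \<times> C) - E then dH e
             else if e \<in> E - ({s} \<times> C) then 2 * ereal (real (wG e))
             else min (dH e) (2 * ereal (real (wG e))))"

lemma k_bounds: "1 \<le> k" "k \<le> h" "h \<noteq> 1 \<Longrightarrow> Suc k \<le> h"
proof -
  have "k = (h + 1) div 2" unfolding k_def by linarith
  then show "1 \<le> k" "k \<le> h" "h \<noteq> 1 \<Longrightarrow> Suc k \<le> h" using h1 by auto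
qed

lemma hitting_shortest_path:
  "is_shortest_path V E wg p u v \<Longrightarrow> length p = k \<Longrightarrow>
    \<exists>q. is_shortest_path V E wg q u v \<and> length q = k \<and> set q \<inter> C \<noteq> {}"
  using hit unfolding k_def by blast

lemma V_subset_C_if_one_hop:
  assumes "h = 1"
  shows "V \<subseteq> C"
proof
  fix u assume "u \<in> V"
  then have path: "is_path V E [u] u u" by (simp add: is_path_iff_walk)
  have "0 \<le> dist V E wg u u" by (rule dist_nonneg) simp
  then have "is_shortest_path V E wg [u] u u"
    using path dist_le_path_weight[OF path, of wg] by (simp add: is_shortest_path_def)
  moreover have "k = 1" using k_bounds \<open>h = 1\<close> by simp
  ultimately obtain q where "is_shortest_path V E wg q u u" "length q = 1" "set q \<inter> C \<noteq> {}"
    using hitting_shortest_path[of "[u]" u u] by auto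
  then show "u \<in> C"
    by (auto simp: is_shortest_path_def is_path_iff_walk length_Suc_conv)
qed

lemma dt_nonneg: "x \<in> C \<Longrightarrow> y \<in> V \<Longrightarrow> 0 \<le> dt x y"
  using dt dist_nonneg[of E wg V x y] order_trans by fastforce

lemma dt_le_walk:
  assumes "x \<in> C" "walk E p" "p \<noteq> []" "hd p = x" "set p \<subseteq> V" "length p \<le> Suc h"
  shows "dt x (last p) \<le> 2 * path_weight wg p"
proof -
  have "last p \<in> V" using assms(3,5) by auto
  then have "dt x (last p) \<le> 2 * hdist h V E wg x (last p)"
    using dt assms(1) by blast
  also have "\<dots> \<le> 2 * path_weight wg p"
    using hdist_le_walk[of E wg p V h] assms by (simp add: ereal_mult_left_mono)
  finally show ?thesis .
qed

lemma dt_nonneg_on_hubs: "\<forall>e\<in>C \<times> C. 0 \<le> (\<lambda>(a, b). dt a b) e"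
  using dt_nonneg CV by auto

lemma dH_nonneg: "0 \<le> dH e"
  unfolding dH_def by (cases e) (simp add: dist_nonneg[OF dt_nonneg_on_hubs])

lemma dH_le_dt: "x \<in> C \<Longrightarrow> y \<in> C \<Longrightarrow> dH (x, y) \<le> dt x y"
  unfolding dH_def using dist_le_edge[OF dt_nonneg_on_hubs, of x y] by simp

lemma dH_triangle: "y \<in> C \<Longrightarrow> z \<in> C \<Longrightarrow> dH (x, z) \<le> dH (x, y) + dt y z"
  unfolding dH_def
  using dist_triangle_edge[OF finite_subset[OF CV finV] dt_nonneg_on_hubs, of y z x] by simp

lemma w'_nonneg: "0 \<le> w' e"
  unfolding w'_def using dH_nonneg by auto

lemma w'_le_double: "e \<in> E \<Longrightarrow> w' e \<le> 2 * wg e"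
  unfolding w'_def by auto

lemma w'_eq_double: "e \<in> E \<Longrightarrow> fst e \<noteq> s \<Longrightarrow> w' e = 2 * wg e"
  unfolding w'_def by auto

lemma w'_source_hub: "y \<in> C \<Longrightarrow> w' (s, y) = dH (s, y)"
proof -
  assume y: "y \<in> C"
  have "dH (s, y) \<le> 2 * wg (s, y)" if "(s, y) \<in> E"
  proof -
    have "dH (s, y) \<le> dt s y" using dH_le_dt sC y by blast
    also have "\<dots> \<le> 2 * path_weight wg [s, y]"
      using dt_le_walk[of s "[s, y]"] that sC sV y CV h1 by auto
    finally show ?thesis by simp
  qed
  then show ?thesis unfolding w'_def using y by auto
qed

lemma w'_source_non_hub:
  "(s, y) \<in> E' \<Longrightarrow> y \<notin> C \<Longrightarrow> (s, y) \<in> E \<and> w' (s, y) = 2 * wg (s, y)"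
  unfolding E'_def w'_def by auto

lemma walk_E': "walk E p \<Longrightarrow> walk E' p"
  unfolding E'_def by (rule walk_mono) auto

lemma path_weight_w'_le: "walk E p \<Longrightarrow> path_weight w' p \<le> 2 * path_weight wg p"
  using path_weight_mono[of E w' "\<lambda>e. 2 * wg e" p] w'_le_double path_weight_cmult[of wg 2 p]
  by simp

lemma path_weight_w'_eq:
  "walk E p \<Longrightarrow> s \<notin> set p \<Longrightarrow> path_weight w' p = 2 * path_weight wg p"
  using path_weight_cong[of E p w' "\<lambda>e. 2 * wg e"] w'_eq_double path_weight_cmult[of wg 2 p]
  by fastforce

lemma shortest_path_in_G_if_avoiding_source:
  assumes p: "is_shortest_path V E' w' p u v" and "s \<notin> set p"
  shows "is_shortest_path V E wg p u v"
proof -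
  have path: "is_path V E p u v"
    using p \<open>s \<notin> set p\<close> walk_avoiding[of E s C p]
    by (auto simp: is_shortest_path_def is_path_iff_walk E'_def)
  have "path_weight wg p \<le> path_weight wg r" if r: "is_path V E r u v" for r
  proof -
    have "2 * path_weight wg p = path_weight w' p"
      using path_weight_w'_eq path \<open>s \<notin> set p\<close> by (simp add: is_path_iff_walk)
    also have "\<dots> = dist V E' w' u v" using p by (simp add: is_shortest_path_def)
    also have "\<dots> \<le> path_weight w' r"
      using r walk_E' by (intro dist_le_path_weight) (simp add: is_path_iff_walk)
    also have "\<dots> \<le> 2 * path_weight wg r"
      using r path_weight_w'_le by (simp add: is_path_iff_walk)
    finally show ?thesis by (simp add: ereal_mult_le_mult_iff)
  qed
  then have "path_weight wg p \<le> dist V E wg u v"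
    unfolding dist_def by (auto intro: Inf_greatest)
  then show ?thesis
    using path dist_le_path_weight[OF path] by (simp add: is_shortest_path_def antisym)
qed

lemma w'_source_to_hub_le:
  assumes "(s, y) \<in> E'" "walk E (y # q @ [c])" "set (y # q) \<subseteq> V" "c \<in> C"
    and "length (q @ [c]) \<le> k"
  shows "w' (s, c) \<le> w' (s, y) + 2 * path_weight wg (y # q @ [c])"
proof (cases "y \<in> C")
  case True
  have "dt y c \<le> 2 * path_weight wg (y # q @ [c])"
    using dt_le_walk[of y "y # q @ [c]"] True assms k_bounds CV by auto
  then have "dH (s, y) + dt y c \<le> w' (s, y) + 2 * path_weight wg (y # q @ [c])"
    using w'_source_hub[OF True] by (simp add: add_left_mono)
  then show ?thesis
    using w'_source_hub[OF \<open>c \<in> C\<close>] dH_triangle[OF True \<open>c \<in> C\<close>, of s] by simp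
next
  case False
  then have sy: "(s, y) \<in> E" "w' (s, y) = 2 * wg (s, y)"
    using w'_source_non_hub assms(1) by auto
  have "h \<noteq> 1" using False V_subset_C_if_one_hop assms(3) by auto
  have "w' (s, c) = dH (s, c)" using w'_source_hub \<open>c \<in> C\<close> .
  also have "\<dots> \<le> dt s c" using dH_le_dt sC \<open>c \<in> C\<close> .
  also have "\<dots> \<le> 2 * path_weight wg (s # y # q @ [c])"
    using dt_le_walk[of s "s # y # q @ [c]"] sy(1) assms sC sV CV k_bounds(3)[OF \<open>h \<noteq> 1\<close>]
    by auto
  also have "\<dots> = w' (s, y) + 2 * path_weight wg (y # q @ [c])"
    using sy(2) path_weight_nonneg[of E wg "y # q @ [c]"] assms(2)
    by (simp add: ereal_right_distrib)
  finally show ?thesis .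
qed

lemma reroute_through_hub_le:
  assumes "(s, y) \<in> E'" "walk E (y # q1 @ c # q2)" "set (y # q1 @ c # q2) \<subseteq> V" "c \<in> C"
    and "length (q1 @ c # q2) \<le> k"
  shows "w' (s, c) + path_weight w' (c # q2) \<le> w' (s, y) + 2 * path_weight wg (y # q1 @ c # q2)"
proof -
  have walks: "walk E (y # q1 @ [c])" "walk E (c # q2)"
    using walk_append[of "y # q1 @ [c]" E q2] assms(2) by simp_all
  have "w' (s, c) + path_weight w' (c # q2)
      \<le> (w' (s, y) + 2 * path_weight wg (y # q1 @ [c])) + 2 * path_weight wg (c # q2)"
    using w'_source_to_hub_le[of y q1 c] path_weight_w'_le[OF walks(2)] walks(1) assms
    by (intro add_mono) auto
  also have "\<dots> = w' (s, y) + 2 * path_weight wg (y # q1 @ c # q2)"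
    using path_weight_append[of "y # q1 @ [c]" wg q2]
      path_weight_nonneg[of E wg] walks
    by (simp add: ereal_right_distrib add.assoc)
  finally show ?thesis .
qed

lemma long_shortest_path_reroute:
  assumes p: "is_shortest_path V E' w' p s v" and finite_dist: "dist V E' w' s v \<noteq> \<infinity>"
    and long: "Suc h < length p"
  obtains W where "walk E' W" "W \<noteq> []" "hd W = s" "last W = v" "set W \<subseteq> V"
    "path_weight w' W \<le> dist V E' w' s v" "length W < length p"
proof -
  have path: "hd p = s" "last p = v" "set p \<subseteq> V" "distinct p" "walk E' p"
    using p by (auto simp: is_shortest_path_def is_path_iff_walk)
  obtain y rest where p_eq: "p = s # y # rest"
    using long path(1) by (cases p rule: remdups_adj.cases) auto
  define seg b where "seg = take k rest" and "b = drop k rest"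
  define z where "z = last seg"
  have "k \<le> length rest" using long p_eq k_bounds by auto
  then have seg: "length seg = k" "seg \<noteq> []" using k_bounds(1) unfolding seg_def by auto
  have p_split: "p = [s, y] @ seg @ b" "p = [s] @ (y # seg) @ b"
    using p_eq unfolding seg_def b_def by simp_all
  have "s \<notin> set (y # seg)" using path(4) p_eq unfolding seg_def by (auto dest: in_set_takeD)
  moreover have "walk E' (y # seg)" "walk E' (z # b)"
    using path(5) walk_infix[of "y # seg" E' "[s]" b] p_split(2) seg(2) unfolding z_def by auto
  ultimately have seg_walk: "walk E (y # seg)"
    using walk_avoiding[of E s C] unfolding E'_def by blast
  have "is_shortest_path V E' w' seg (hd seg) z"
    using shortest_path_infix[of E' w' V "[s, y]" seg b s v] p p_split(1) seg(2) finite_dist w'_nonneg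
    unfolding z_def by simp
  then have seg_shortest: "is_shortest_path V E wg seg (hd seg) z"
    using \<open>s \<notin> set (y # seg)\<close> by (auto intro: shortest_path_in_G_if_avoiding_source)
  then obtain q where q: "is_shortest_path V E wg q (hd seg) z" "length q = k" "set q \<inter> C \<noteq> {}"
    using hitting_shortest_path seg(1) by blast
  then obtain c q1 q2 where q_eq: "q = q1 @ c # q2" and "c \<in> C"
    by (metis disjoint_iff split_list)
  have q_path: "hd q = hd seg" "last q = z" "set q \<subseteq> V" "walk E q"
    and same_weight: "path_weight wg q = path_weight wg seg"
    using q(1) seg_shortest by (auto simp: is_shortest_path_def is_path_iff_walk)
  define W where "W = [s] @ (c # q2) @ b"
  have "path_weight w' W = w' (s, c) + path_weight w' (c # q2) + path_weight w' (z # b)"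
    using path_weight_infix[of "c # q2" w' "[s]" b] q_path(2) q_eq unfolding W_def by simp
  also have "\<dots> \<le> w' (s, y) + 2 * path_weight wg (y # q) + path_weight w' (z # b)"
    using reroute_through_hub_le[of y q1 c q2] seg_walk q_path q(2) q_eq \<open>c \<in> C\<close> path(3) p_eq
      walk_Cons[of seg E y] walk_Cons[of q E y] seg(2) path(5)
    by (intro add_right_mono) (auto simp: E'_def)
  also have "2 * path_weight wg (y # q) = path_weight w' (y # seg)"
    using path_weight_w'_eq[OF seg_walk \<open>s \<notin> set (y # seg)\<close>] same_weight q_path(1) seg(2)
      path_weight_Cons[of q wg y] path_weight_Cons[of seg wg y] q(2) seg(1)
    by (metis length_greater_0_conv)
  also have "w' (s, y) + path_weight w' (y # seg) + path_weight w' (z # b) = dist V E' w' s v"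
    using p p_split(2) path_weight_infix[of "y # seg" w' "[s]" b] unfolding z_def
    by (simp add: is_shortest_path_def seg(2))
  finally have "path_weight w' W \<le> dist V E' w' s v" .
  moreover have "walk E' W"
    using walk_E'[OF q_path(4)] \<open>walk E' (z # b)\<close> \<open>c \<in> C\<close> q_path(2) q_eq
      walk_append[of q1 E' "c # q2"] walk_append[of "c # q2" E' b]
    unfolding W_def by (cases q1) (auto simp: E'_def)
  moreover have "last W = v"
    using path(2) p_split(2) q_path(2) q_eq seg(2) unfolding W_def z_def by (cases b) auto
  moreover have "set W \<subseteq> V" "length W < length p"
    using path(3) q_path(3) q(2) seg(1) p_split(2) q_eq unfolding W_def by auto
  moreover have "W \<noteq> []" "hd W = s" unfolding W_def by simp_all
  ultimately show thesis using that by blast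
qed

theorem hdist_eq_dist: "hdist h V E' w' s v = dist V E' w' s v"
proof (rule antisym[OF _ dist_le_hdist])
  show "hdist h V E' w' s v \<le> dist V E' w' s v"
  proof (cases "dist V E' w' s v = \<infinity>")
    case False
    then obtain p0 where "is_path V E' p0 s v" using path_exists_if_dist_finite by metis
    then obtain p where p: "is_shortest_path V E' w' p s v"
      and fewest: "\<And>W. walk E' W \<Longrightarrow> W \<noteq> [] \<Longrightarrow> hd W = s \<Longrightarrow> last W = v \<Longrightarrow> set W \<subseteq> V \<Longrightarrow>
                     path_weight w' W \<le> dist V E' w' s v \<Longrightarrow> length p \<le> length W"
      using shortest_path_fewest_edges[OF finV] w'_nonneg by metis
    have "length p \<le> Suc h"
      using long_shortest_path_reroute[OF p False] fewest by (metis not_le leD)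
    then show ?thesis
      using hdist_le_path_weight[of V E' p s v h w'] p by (simp add: is_shortest_path_def)
  qed simp
qed

end

theorem lemma3p3:
  fixes V :: "'a set" and E :: "('a \<times> 'a) set" and wG :: "'a \<times> 'a \<Rightarrow> nat"
    and s :: 'a and h :: nat and C :: "'a set" and dt :: "'a \<Rightarrow> 'a \<Rightarrow> ereal"
  assumes finV: "finite V"
    and EV: "E \<subseteq> V \<times> V"
    and sV: "s \<in> V"
    and h1: "1 \<le> h" and hn: "h \<le> card V"
    and CV: "C \<subseteq> V" and sC: "s \<in> C"
    and hit: "\<forall>u v. (\<exists>p. is_shortest_path V E (\<lambda>e. ereal (real (wG e))) p u v
                          \<and> length p = nat \<lceil>real h / 2\<rceil>)
               \<longrightarrow> (\<exists>p. is_shortest_path V E (\<lambda>e. ereal (real (wG e))) p u v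
                          \<and> length p = nat \<lceil>real h / 2\<rceil> \<and> set p \<inter> C \<noteq> {})"
    and dt: "\<forall>x\<in>C. \<forall>v\<in>V. dist V E (\<lambda>e. ereal (real (wG e))) x v \<le> dt x v
                         \<and> dt x v \<le> 2 * hdist h V E (\<lambda>e. ereal (real (wG e))) x v"
  shows "\<forall>v\<in>V.
    (let dH = (\<lambda>(x, y). dist C (C \<times> C) (\<lambda>(a, b). dt a b) x y);
         E' = E \<union> ({s} \<times> C);
         w' = (\<lambda>e. if e \<in> ({s} \<times> C) - E then dH e
                   else if e \<in> E - ({s} \<times> C) then 2 * ereal (real (wG e))
                   else min (dH e) (2 * ereal (real (wG e))))
     in hdist h V E' w' s v = dist V E' w' s v)"
proof -
  interpret hop_reduction V E wG s h C dt
    using finV sV h1 CV sC hit dt by unfold_locales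
  show ?thesis
    unfolding Let_def using hdist_eq_dist[unfolded E'_def w'_def dH_def] by blast
qed

end
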